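(* The set of spacelike pairs $\{(x,y)\in\mathrm{dS}^d\times\mathrm{dS}^d:\beta(x-y,x-y)<0\}$ coincides with $$\mathrm{SO}_{1,d}(\mathbb R).(W^+\times(-W^+))=\bigcup_{W\in\mathcal W}W\times(-W).$$ For $d>1$ it also coincides with $\mathrm{SO}_{1,d}(\mathbb R)_e.(W^+\times(-W^+))$.
   Context: Let $d\ge1$, $\beta(x,y)=x_0y_0-x_1y_1-\dots-x_dy_d$ on $\mathbb R^{1+d}$, $\mathrm{dS}^d=\{x\in\mathbb R^{1+d}:\beta(x,x)=-1\}$ (de Sitter space). $\mathrm{SO}_{1,d}(\mathbb R)$ (determinant one, preserving $\beta$) acts diagonally on pairs. The canonical wedge is $W^+=\{x\in\mathrm{dS}^d:x_1>|x_0|\}$, and a wedge region is a set $W=g.W^+$ with $g\in\mathrm{SO}_{1,d}(\mathbb R)$; $\mathcal W$ is the set of wedge regions. *)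

theory Defs
  imports "HOL-Analysis.Analysis"
begin

text \<open>Minkowski space R^{1+d} is modelled as real^'n with CARD('n) = 1 + d.
  The index i0 plays the role of the time coordinate x_0, and i1 (distinct from i0)
  the role of the coordinate x_1.\<close>

definition beta :: "'n::finite \<Rightarrow> real^'n \<Rightarrow> real^'n \<Rightarrow> real" where
  "beta i0 x y = x$i0 * y$i0 - (\<Sum>i\<in>UNIV - {i0}. x$i * y$i)"

definition deSitter :: "'n::finite \<Rightarrow> (real^'n) set" where
  "deSitter i0 = {x. beta i0 x x = -1}"

definition SO1d :: "'n::finite \<Rightarrow> (real^'n^'n) set" where
  "SO1d i0 = {g. det g = 1 \<and> (\<forall>x y. beta i0 (g *v x) (g *v y) = beta i0 x y)}"

definition SO1d_e :: "'n::finite \<Rightarrow> (real^'n^'n) set" where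
  "SO1d_e i0 = connected_component_set (SO1d i0) (mat 1)"

definition Wplus :: "'n::finite \<Rightarrow> 'n \<Rightarrow> (real^'n) set" where
  "Wplus i0 i1 = {x \<in> deSitter i0. x$i1 > \<bar>x$i0\<bar>}"

definition wedges :: "'n::finite \<Rightarrow> 'n \<Rightarrow> (real^'n) set set" where
  "wedges i0 i1 = (\<lambda>g. (\<lambda>x. g *v x) ` Wplus i0 i1) ` SO1d i0"

definition spacelike_pairs :: "'n::finite \<Rightarrow> ((real^'n) \<times> (real^'n)) set" where
  "spacelike_pairs i0 = {(x, y). x \<in> deSitter i0 \<and> y \<in> deSitter i0 \<and> beta i0 (x - y) (x - y) < 0}"

definition orbit_pairs :: "(real^'n::finite^'n) set \<Rightarrow> (real^'n) set \<Rightarrow> ((real^'n) \<times> (real^'n)) set" where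
  "orbit_pairs G W = {(g *v x, g *v y) | g x y. g \<in> G \<and> x \<in> W \<and> y \<in> uminus ` W}"

end

theory Submission
  imports Defs
begin

text \<open>
  A spacelike pair of de Sitter points can be written as \<open>x = w + c\<sigma>\<close>, \<open>y = w - c\<sigma>\<close> with
  \<open>\<sigma>\<close> a unit spacelike vector orthogonal to \<open>w\<close> and \<open>c\<^sup>2 = 1 + \<beta>(w, w) > 0\<close>. There is a future
  unit timelike \<open>\<tau> \<bottom> \<sigma>\<close> with \<open>\<beta>(\<tau>, w)\<^sup>2 < c\<^sup>2\<close>; if \<open>g\<close> maps the basis vectors \<open>e\<^sub>0, e\<^sub>1\<close> to
  \<open>\<plusminus>\<tau>, \<sigma>\<close>, then \<open>g\<^sup>-\<^sup>1 x\<close> and \<open>-g\<^sup>-\<^sup>1 y\<close> have \<open>x\<^sub>1\<close>-coordinate \<open>c\<close> and time coordinate of modulus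
  \<open>|\<beta>(\<tau>, w)| < c\<close>, so they lie in \<open>W\<^sup>+\<close>. Conversely the sum of two points of \<open>W\<^sup>+\<close> is spacelike.

  Such \<open>g\<close> are built from reflections. Two reflections in vectors whose norms have the same sign
  compose to an element of the identity component: interpolating between the two vectors keeps
  the norm away from zero, giving a path of \<open>\<beta>\<close>-isometries starting at the identity.
\<close>

definition metric_sign :: "'n::finite \<Rightarrow> 'n \<Rightarrow> real" where
  "metric_sign i0 i = (if i = i0 then 1 else -1)"

definition metric_matrix :: "'n::finite \<Rightarrow> real^'n^'n" where
  "metric_matrix i0 = (\<chi> i j. if i = j then metric_sign i0 i else 0)"

lemma metric_sign_simps [simp]:
  "metric_sign i0 i0 = 1"
  "i \<noteq> i0 \<Longrightarrow> metric_sign i0 i = -1"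
  by (simp_all add: metric_sign_def)

lemma beta_eq_sum: "beta i0 x y = (\<Sum>i\<in>UNIV. metric_sign i0 i * x$i * y$i)"
proof -
  have "(\<Sum>i\<in>UNIV. metric_sign i0 i * x$i * y$i)
      = x$i0 * y$i0 + (\<Sum>i\<in>UNIV-{i0}. metric_sign i0 i * x$i * y$i)"
    by (simp add: sum.remove[of _ i0])
  also have "(\<Sum>i\<in>UNIV-{i0}. metric_sign i0 i * x$i * y$i) = - (\<Sum>i\<in>UNIV-{i0}. x$i * y$i)"
    by (simp add: sum_negf[symmetric])
  finally show ?thesis by (simp add: beta_def)
qed

lemma metric_matrix_mult: "metric_matrix i0 *v y = (\<chi> i. metric_sign i0 i * y$i)"
proof -
  have "\<And>i j. (if i = j then metric_sign i0 i else 0) * y$j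
      = (if i = j then metric_sign i0 i * y$i else 0)"
    by auto
  then show ?thesis by (simp add: vec_eq_iff matrix_vector_mult_def metric_matrix_def)
qed

lemma beta_eq_inner: "beta i0 x y = x \<bullet> (metric_matrix i0 *v y)"
  by (simp add: beta_eq_sum metric_matrix_mult inner_vec_def mult_ac)

lemma beta_commute: "beta i0 x y = beta i0 y x"
  by (simp add: beta_def mult.commute)

lemma beta_linear_left [simp]:
  "beta i0 (a + b) c = beta i0 a c + beta i0 b c"
  "beta i0 (a - b) c = beta i0 a c - beta i0 b c"
  "beta i0 (r *\<^sub>R a) c = r * beta i0 a c"
  "beta i0 (- a) c = - beta i0 a c"
  "beta i0 0 c = 0"
  by (simp_all add: beta_eq_inner inner_add_left inner_diff_left)

lemma beta_linear_right [simp]: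
  "beta i0 c (a + b) = beta i0 c a + beta i0 c b"
  "beta i0 c (a - b) = beta i0 c a - beta i0 c b"
  "beta i0 c (r *\<^sub>R a) = r * beta i0 c a"
  "beta i0 c (- a) = - beta i0 c a"
  "beta i0 c 0 = 0"
  by (simp_all add: beta_commute[of i0 c])

lemma axis_component: "axis j x $ i = (if i = j then x else 0)"
  by (simp add: axis_def)

lemma beta_axis [simp]:
  "beta i0 (axis j 1) v = metric_sign i0 j * v$j"
  "beta i0 v (axis j 1) = metric_sign i0 j * v$j"
proof -
  have "\<And>i. metric_sign i0 i * axis j 1 $ i * v$i = (if i = j then metric_sign i0 j * v$j else 0)"
    by (auto simp: axis_component)
  then show "beta i0 (axis j 1) v = metric_sign i0 j * v$j"
    by (simp add: beta_eq_sum)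
  then show "beta i0 v (axis j 1) = metric_sign i0 j * v$j"
    by (simp add: beta_commute)
qed

lemma continuous_on_beta [continuous_intros]:
  "continuous_on S f \<Longrightarrow> continuous_on S g \<Longrightarrow> continuous_on S (\<lambda>t. beta i0 (f t) (g t))"
  unfolding beta_def by (intro continuous_intros)

lemma Wplus_iff: "p \<in> Wplus i0 i1 \<longleftrightarrow> beta i0 p p = -1 \<and> \<bar>p$i0\<bar> < p$i1"
  by (simp add: Wplus_def deSitter_def)

lemma beta_le_two_coordinates:
  assumes "i1 \<noteq> i0"
  shows "beta i0 v v \<le> (v$i0)\<^sup>2 - (v$i1)\<^sup>2"
proof -
  have "(\<Sum>i\<in>UNIV - {i0}. v$i * v$i) = v$i1 * v$i1 + (\<Sum>i\<in>UNIV - {i0} - {i1}. v$i * v$i)"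
    using assms by (subst sum.remove[of _ i1]) auto
  moreover have "(\<Sum>i\<in>UNIV - {i0} - {i1}. v$i * v$i) \<ge> 0"
    by (intro sum_nonneg) simp
  ultimately show ?thesis
    by (simp add: beta_def power2_eq_square)
qed

lemma timelike_time_component_nonzero:
  assumes "beta i0 v v > 0"
  shows "v$i0 \<noteq> 0"
proof
  assume "v$i0 = 0"
  moreover have "(\<Sum>i\<in>UNIV - {i0}. v$i * v$i) \<ge> 0"
    by (intro sum_nonneg) simp
  ultimately show False
    using assms by (simp add: beta_def)
qed

definition reflection :: "'n::finite \<Rightarrow> real^'n \<Rightarrow> real^'n \<Rightarrow> real^'n" where
  "reflection i0 w x = x - (2 * beta i0 x w / beta i0 w w) *\<^sub>R w"

definition reflection_matrix :: "'n::finite \<Rightarrow> real^'n \<Rightarrow> real^'n^'n" where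
  "reflection_matrix i0 w = matrix (reflection i0 w)"

lemma linear_reflection: "linear (reflection i0 w)"
  by (rule linearI) (simp_all add: reflection_def algebra_simps add_divide_distrib)

lemma reflection_matrix_mult [simp]: "reflection_matrix i0 w *v x = reflection i0 w x"
  unfolding reflection_matrix_def by (metis matrix_vector_mul(2) linear_reflection)

lemma reflection_uminus: "reflection i0 (- w) = reflection i0 w"
  by (simp add: reflection_def fun_eq_iff)

lemma reflection_orthogonal: "beta i0 x w = 0 \<Longrightarrow> reflection i0 w x = x"
  by (simp add: reflection_def)

lemma reflection_self: "beta i0 w w \<noteq> 0 \<Longrightarrow> reflection i0 w w = - w"
  by (simp add: reflection_def scaleR_2 algebra_simps)

lemma reflection_swap:
  assumes "beta i0 a a = beta i0 b b" and "beta i0 (a - b) (a - b) \<noteq> 0"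
  shows "reflection i0 (a - b) a = b"
proof -
  have "beta i0 (a - b) (a - b) = 2 * beta i0 a (a - b)"
    using assms(1) by (simp add: beta_commute[of i0 b a])
  then have "2 * beta i0 a (a - b) / beta i0 (a - b) (a - b) = 1"
    using assms(2) by simp
  then show ?thesis
    unfolding reflection_def by (simp only: scaleR_one) simp
qed

lemma beta_reflection:
  assumes "beta i0 w w \<noteq> 0"
  shows "beta i0 (reflection i0 w x) (reflection i0 w y) = beta i0 x y"
proof -
  define a where "a = 2 * beta i0 x w / beta i0 w w"
  define b where "b = 2 * beta i0 y w / beta i0 w w"
  have "beta i0 (reflection i0 w x) (reflection i0 w y)
      = beta i0 x y - b * beta i0 x w - a * beta i0 y w + a * b * beta i0 w w"
    by (simp add: reflection_def a_def b_def beta_commute[of i0 w y] algebra_simps)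
  also have "\<dots> = beta i0 x y"
    using assms by (simp add: a_def b_def field_simps)
  finally show ?thesis .
qed

lemma reflection_reflection:
  assumes "beta i0 w w \<noteq> 0"
  shows "reflection i0 w (reflection i0 w x) = x"
proof -
  define a where "a = 2 * beta i0 x w / beta i0 w w"
  have "beta i0 (x - a *\<^sub>R w) w = - beta i0 x w"
    using assms by (simp add: a_def field_simps)
  then show ?thesis
    using assms by (simp add: reflection_def a_def[symmetric] field_simps)
qed

definition preserves_beta :: "'n::finite \<Rightarrow> real^'n^'n \<Rightarrow> bool" where
  "preserves_beta i0 g \<longleftrightarrow> (\<forall>x y. beta i0 (g *v x) (g *v y) = beta i0 x y)"

lemma SO1d_iff: "g \<in> SO1d i0 \<longleftrightarrow> det g = 1 \<and> preserves_beta i0 g"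
  by (simp add: SO1d_def preserves_beta_def)

lemma preserves_betaD: "preserves_beta i0 g \<Longrightarrow> beta i0 (g *v x) (g *v y) = beta i0 x y"
  by (simp add: preserves_beta_def)

lemma preserves_beta_mult:
  "preserves_beta i0 g \<Longrightarrow> preserves_beta i0 h \<Longrightarrow> preserves_beta i0 (g ** h)"
  by (simp add: preserves_beta_def matrix_vector_mul_assoc[symmetric])

lemma preserves_beta_reflection_matrix:
  "beta i0 w w \<noteq> 0 \<Longrightarrow> preserves_beta i0 (reflection_matrix i0 w)"
  by (simp add: preserves_beta_def beta_reflection)

lemma reflection_matrix_square:
  "beta i0 w w \<noteq> 0 \<Longrightarrow> reflection_matrix i0 w ** reflection_matrix i0 w = mat 1"
  by (simp add: matrix_eq matrix_vector_mul_assoc[symmetric] reflection_reflection)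

lemma det_metric_matrix: "det (metric_matrix i0) \<noteq> 0"
proof -
  have "det (metric_matrix i0) = (\<Prod>i\<in>UNIV. metric_matrix i0 $ i $ i)"
    by (rule det_diagonal) (simp add: metric_matrix_def)
  then show ?thesis
    by (simp add: metric_matrix_def metric_sign_def)
qed

lemma preserves_beta_det_square:
  assumes "preserves_beta i0 g"
  shows "(det g)\<^sup>2 = 1"
proof -
  let ?J = "metric_matrix i0"
  let ?K = "transpose g ** ?J ** g"
  have "x \<bullet> (?K *v y) = x \<bullet> (?J *v y)" for x y
  proof -
    have "?K *v y = transpose g *v (?J *v (g *v y))"
      by (simp add: matrix_vector_mul_assoc matrix_mul_assoc)
    then have "x \<bullet> (?K *v y) = (g *v x) \<bullet> (?J *v (g *v y))"
      by (simp add: inner_commute[of x] dot_lmul_matrix) (simp add: inner_commute)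
    then show ?thesis
      using preserves_betaD[OF assms] by (simp add: beta_eq_inner)
  qed
  then have "?K *v y = ?J *v y" for y
    using inner_diff_right[of "?K *v y - ?J *v y" "?K *v y" "?J *v y"] by simp
  then have "transpose g ** ?J ** g = ?J"
    by (simp add: matrix_eq)
  then have "det g * det ?J * det g = det ?J"
    by (metis det_mul det_transpose)
  then show ?thesis
    using det_metric_matrix[of i0] by (simp add: power2_eq_square algebra_simps)
qed

lemma mat_1_in_SO1d: "mat 1 \<in> SO1d i0"
  by (simp add: SO1d_def)

lemma SO1d_mult: "g \<in> SO1d i0 \<Longrightarrow> h \<in> SO1d i0 \<Longrightarrow> g ** h \<in> SO1d i0"
  by (simp add: SO1d_iff det_mul preserves_beta_mult)

lemma SO1d_e_subset: "SO1d_e i0 \<subseteq> SO1d i0"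
  by (simp add: SO1d_e_def connected_component_subset)

lemma mat_1_in_SO1d_e: "mat 1 \<in> SO1d_e i0"
  by (simp add: SO1d_e_def mat_1_in_SO1d)

lemma connected_subset_SO1d_e:
  "connected C \<Longrightarrow> C \<subseteq> SO1d i0 \<Longrightarrow> mat 1 \<in> C \<Longrightarrow> C \<subseteq> SO1d_e i0"
  unfolding SO1d_e_def by (rule connected_component_maximal)

lemma continuous_on_det:
  fixes f :: "'a::topological_space \<Rightarrow> real^'n::finite^'n"
  shows "continuous_on S f \<Longrightarrow> continuous_on S (\<lambda>t. det (f t))"
  unfolding det_def by (intro continuous_intros)

lemma SO1d_e_mult:
  assumes g: "g \<in> SO1d_e i0" and h: "h \<in> SO1d_e i0"
  shows "g ** h \<in> SO1d_e i0"
proof -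
  let ?C = "SO1d_e i0"
  have "connected ((\<lambda>k. g ** k) ` ?C)"
    by (intro connected_continuous_image)
      (auto simp: SO1d_e_def matrix_matrix_mult_def intro!: continuous_intros)
  moreover have "g \<in> (\<lambda>k. g ** k) ` ?C"
    using mat_1_in_SO1d_e by (metis image_eqI matrix_mul_rid)
  ultimately have "connected (?C \<union> (\<lambda>k. g ** k) ` ?C)"
    using g by (intro connected_Un) (auto simp: SO1d_e_def)
  moreover have "?C \<union> (\<lambda>k. g ** k) ` ?C \<subseteq> SO1d i0"
    using g SO1d_e_subset SO1d_mult by blast
  ultimately have "?C \<union> (\<lambda>k. g ** k) ` ?C \<subseteq> ?C"
    using mat_1_in_SO1d_e by (intro connected_subset_SO1d_e) auto
  then show ?thesis
    using h by blast
qed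

text \<open>The determinant is continuous with values in \<open>{1, -1}\<close>, hence constant on a connected set.\<close>
lemma continuous_image_subset_SO1d_e:
  assumes "connected S" and "continuous_on S P" and "s0 \<in> S" and "P s0 = mat 1"
    and "\<And>t. t \<in> S \<Longrightarrow> preserves_beta i0 (P t)"
  shows "P ` S \<subseteq> SO1d_e i0"
proof (rule connected_subset_SO1d_e)
  let ?D = "(\<lambda>t. det (P t)) ` S"
  have sq: "(det (P t))\<^sup>2 = 1" if "t \<in> S" for t
    using preserves_beta_det_square assms(5) that by blast
  have "connected ?D"
    using assms(1,2) by (intro connected_continuous_image continuous_on_det)
  moreover have "1 \<in> ?D"
    using assms(3,4) by force
  moreover have "0 \<notin> ?D"
    using sq by force
  ultimately have "-1 \<notin> ?D"
    unfolding connected_iff_interval by (metis neg_le_0_iff_le zero_le_one)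
  then have "det (P t) = 1" if "t \<in> S" for t
    using sq[OF that] that by (force simp: power2_eq_1_iff)
  then show "P ` S \<subseteq> SO1d i0"
    using assms(5) by (auto simp: SO1d_iff)
  show "connected (P ` S)"
    using assms(1,2) by (rule connected_continuous_image[rotated])
  show "mat 1 \<in> P ` S"
    using assms(3,4) by force
qed

lemma reflection_pair_in_SO1d_e:
  assumes "beta i0 u u * beta i0 v v > 0"
  shows "reflection_matrix i0 u ** reflection_matrix i0 v \<in> SO1d_e i0"
proof -
  define u' where "u' = (if beta i0 u v * beta i0 v v \<ge> 0 then u else -u)"
  have u': "reflection_matrix i0 u' = reflection_matrix i0 u" "beta i0 u' u' = beta i0 u u"
    "beta i0 u' v * beta i0 v v \<ge> 0"
    by (simp_all add: u'_def reflection_matrix_def reflection_uminus)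
  define w where "w t = (1 - t) *\<^sub>R v + t *\<^sub>R u'" for t :: real
  text \<open>Along the segment from \<open>v\<close> to \<open>\<plusminus>u\<close> the norm keeps the sign of \<open>\<beta>(v, v)\<close>.\<close>
  have nonnull: "beta i0 (w t) (w t) \<noteq> 0" if "t \<in> {0..1}" for t
  proof -
    let ?Bv = "beta i0 v v"
    have "beta i0 (w t) (w t) * ?Bv
        = (1 - t)\<^sup>2 * ?Bv\<^sup>2 + 2 * t * (1 - t) * (beta i0 u' v * ?Bv) + t\<^sup>2 * (beta i0 u' u' * ?Bv)"
      by (simp add: w_def beta_commute[of i0 v u'] algebra_simps power2_eq_square)
    moreover have "(1 - t)\<^sup>2 * ?Bv\<^sup>2 \<ge> 0" "2 * t * (1 - t) * (beta i0 u' v * ?Bv) \<ge> 0"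
      "t\<^sup>2 * (beta i0 u' u' * ?Bv) \<ge> 0"
      using that u'(2,3) assms by simp_all
    moreover have "(1 - t)\<^sup>2 * ?Bv\<^sup>2 > 0 \<or> t\<^sup>2 * (beta i0 u' u' * ?Bv) > 0"
      using u'(2) assms by (cases "t = 0") auto
    ultimately have "beta i0 (w t) (w t) * ?Bv > 0"
      by linarith
    then show ?thesis
      by auto
  qed
  define P where "P t = reflection_matrix i0 (w t) ** reflection_matrix i0 v" for t
  have "P ` {0..1} \<subseteq> SO1d_e i0"
  proof (rule continuous_image_subset_SO1d_e)
    show "continuous_on {0..1} P"
      unfolding P_def reflection_matrix_def matrix_def reflection_def matrix_matrix_mult_def w_def
      using nonnull by (intro continuous_intros) (auto simp: w_def)
    have "beta i0 v v \<noteq> 0"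
      using assms by auto
    then show "P 0 = mat 1"
      by (simp add: P_def w_def reflection_matrix_square)
    show "preserves_beta i0 (P t)" if "t \<in> {0..1}" for t
      using nonnull[OF that] assms
      by (auto simp: P_def intro!: preserves_beta_mult preserves_beta_reflection_matrix)
  qed auto
  moreover have "P 1 = reflection_matrix i0 u ** reflection_matrix i0 v"
    by (simp add: P_def w_def u'(1))
  ultimately show ?thesis
    by (metis atLeastAtMost_iff image_subset_iff order_refl zero_le_one)
qed

lemma det_reflection_matrix_axis: "det (reflection_matrix i0 (axis j 1)) = -1"
proof -
  have "reflection_matrix i0 (axis j 1) $ i $ k = (if i = k then (if i = j then -1 else 1) else 0)"
    for i k
    by (auto simp: reflection_matrix_def matrix_def reflection_def axis_component metric_sign_def)
  then have "det (reflection_matrix i0 (axis j 1)) = (\<Prod>i\<in>UNIV. if i = j then -1 else 1)"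
    by (simp add: det_diagonal)
  also have "\<dots> = -1"
    by (simp add: prod.remove[of UNIV j])
  finally show ?thesis .
qed

lemma SO1d_e_move:
  assumes "beta i0 a a = beta i0 b b" and "beta i0 b b * (beta i0 a b + beta i0 b b) > 0"
  obtains g where "g \<in> SO1d_e i0" and "g *v a = b"
    and "\<And>z. beta i0 z a = 0 \<Longrightarrow> beta i0 z b = 0 \<Longrightarrow> g *v z = z"
proof
  let ?g = "reflection_matrix i0 b ** reflection_matrix i0 (a + b)"
  have "beta i0 b b * beta i0 (a + b) (a + b) = 2 * (beta i0 b b * (beta i0 a b + beta i0 b b))"
    using assms(1) by (simp add: beta_commute[of i0 b a] algebra_simps)
  with assms(2) have pos: "beta i0 b b * beta i0 (a + b) (a + b) > 0"
    by linarith
  then show "?g \<in> SO1d_e i0"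
    by (rule reflection_pair_in_SO1d_e)
  have b: "beta i0 b b \<noteq> 0"
    using pos by auto
  have "reflection i0 (a - - b) a = - b"
    using assms(1) pos by (intro reflection_swap) auto
  then show "?g *v a = b"
    using b by (simp add: matrix_vector_mul_assoc[symmetric] reflection_def scaleR_2)
  show "?g *v z = z" if "beta i0 z a = 0" and "beta i0 z b = 0" for z
    using that by (simp add: matrix_vector_mul_assoc[symmetric] reflection_orthogonal)
qed

lemma SO1d_e_frame_up_to_sign:
  assumes "i1 \<noteq> i0" and \<tau>: "beta i0 \<tau> \<tau> = 1" "\<tau> $ i0 > 0"
    and \<sigma>: "beta i0 \<sigma> \<sigma> = -1" "beta i0 \<tau> \<sigma> = 0"
  obtains g and s :: real where "g \<in> SO1d_e i0" "s = 1 \<or> s = -1"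
    and "g *v axis i0 1 = \<tau>" and "g *v axis i1 1 = s *\<^sub>R \<sigma>"
proof -
  obtain M where M: "M \<in> SO1d_e i0" "M *v axis i0 1 = \<tau>"
    using SO1d_e_move[of i0 "axis i0 1" \<tau>] \<tau> by auto
  have "preserves_beta i0 M"
    using M(1) SO1d_e_subset SO1d_iff by blast
  define s1 where "s1 = M *v axis i1 1"
  have s1: "beta i0 s1 s1 = -1" "beta i0 \<tau> s1 = 0"
    using preserves_betaD[OF \<open>preserves_beta i0 M\<close>, of "axis i1 1"]
      preserves_betaD[OF \<open>preserves_beta i0 M\<close>, of "axis i0 1" "axis i1 1"] M(2) assms(1)
    by (simp_all add: s1_def axis_component)
  define s :: real where "s = (if beta i0 s1 \<sigma> \<le> 0 then 1 else -1)"
  have s: "s = 1 \<or> s = -1" and "beta i0 s1 (s *\<^sub>R \<sigma>) \<le> 0"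
    by (auto simp: s_def)
  then have "beta i0 s1 s1 = beta i0 (s *\<^sub>R \<sigma>) (s *\<^sub>R \<sigma>)"
    and "beta i0 (s *\<^sub>R \<sigma>) (s *\<^sub>R \<sigma>) * (beta i0 s1 (s *\<^sub>R \<sigma>) + beta i0 (s *\<^sub>R \<sigma>) (s *\<^sub>R \<sigma>)) > 0"
    using s1(1) \<sigma>(1) by auto
  then obtain N where N: "N \<in> SO1d_e i0" "N *v s1 = s *\<^sub>R \<sigma>"
    and N_fixes: "\<And>z. beta i0 z s1 = 0 \<Longrightarrow> beta i0 z (s *\<^sub>R \<sigma>) = 0 \<Longrightarrow> N *v z = z"
    by (rule SO1d_e_move) blast
  have "N *v \<tau> = \<tau>"
    using s1(2) \<sigma>(2) by (intro N_fixes) simp_all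
  then show thesis
    using that[of "N ** M" s] s N M
    by (simp add: SO1d_e_mult matrix_vector_mul_assoc[symmetric] s1_def[symmetric])
qed

lemma SO1d_frame:
  assumes "i1 \<noteq> i0" and "beta i0 \<tau> \<tau> = 1" "\<tau> $ i0 > 0"
    and "beta i0 \<sigma> \<sigma> = -1" "beta i0 \<tau> \<sigma> = 0"
  obtains g where "g \<in> SO1d i0" and "g *v axis i0 1 = \<tau> \<or> g *v axis i0 1 = - \<tau>"
    and "g *v axis i1 1 = \<sigma>"
proof -
  obtain g and s :: real where g: "g \<in> SO1d_e i0" "s = 1 \<or> s = -1"
    "g *v axis i0 1 = \<tau>" "g *v axis i1 1 = s *\<^sub>R \<sigma>"
    using SO1d_e_frame_up_to_sign[OF assms] by blast
  have "g \<in> SO1d i0"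
    using g(1) SO1d_e_subset by blast
  text \<open>The rotation by \<open>\<pi>\<close> in the \<open>e\<^sub>0 e\<^sub>1\<close>-plane fixes the sign of \<open>\<sigma>\<close> at the cost of that of \<open>\<tau>\<close>.\<close>
  let ?R = "reflection_matrix i0 (axis i0 1) ** reflection_matrix i0 (axis i1 1)"
  have "?R \<in> SO1d i0"
    using assms(1) by (auto simp: SO1d_iff det_mul det_reflection_matrix_axis
        intro!: preserves_beta_mult preserves_beta_reflection_matrix)
  moreover have "?R *v axis i0 1 = - axis i0 1" "?R *v axis i1 1 = - axis i1 1"
    using assms(1) by (simp_all add: matrix_vector_mul_assoc[symmetric] reflection_orthogonal
        reflection_self axis_component)
  ultimately have "s = -1 \<Longrightarrow> g ** ?R \<in> SO1d i0 \<and> (g ** ?R) *v axis i0 1 = - \<tau>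
      \<and> (g ** ?R) *v axis i1 1 = \<sigma>"
    using g \<open>g \<in> SO1d i0\<close> by (simp add: SO1d_mult matrix_vector_mul_assoc[symmetric] vec.neg)
  then show thesis
    using g \<open>g \<in> SO1d i0\<close> that by auto
qed

lemma SO1d_e_frame:
  assumes "CARD('n) > 2" and "i1 \<noteq> i0" and "beta i0 \<tau> \<tau> = 1" "\<tau> $ i0 > 0"
    and "beta i0 \<sigma> \<sigma> = -1" "beta i0 \<tau> \<sigma> = 0"
  obtains g where "g \<in> SO1d_e i0" and "g *v axis i0 1 = \<tau>" and "g *v axis i1 1 = (\<sigma> :: real^'n)"
proof -
  obtain g and s :: real where g: "g \<in> SO1d_e i0" "s = 1 \<or> s = -1"
    "g *v axis i0 1 = \<tau>" "g *v axis i1 1 = s *\<^sub>R \<sigma>"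
    using SO1d_e_frame_up_to_sign[OF assms(2-)] by blast
  have "\<not> UNIV \<subseteq> {i0, i1}"
    using assms(1) card_mono[of "{i0, i1}" UNIV] by (auto simp: card_insert_if split: if_splits)
  then obtain k where k: "k \<noteq> i0" "k \<noteq> i1"
    by blast
  text \<open>A rotation by \<open>\<pi>\<close> in a spacelike plane containing \<open>e\<^sub>1\<close> lies in the identity component.\<close>
  let ?R = "reflection_matrix i0 (axis i1 1) ** reflection_matrix i0 (axis k 1)"
  have "?R \<in> SO1d_e i0"
    using assms(2) k by (intro reflection_pair_in_SO1d_e) simp
  moreover have "?R *v axis i0 1 = axis i0 1" "?R *v axis i1 1 = - axis i1 1"
    using assms(2) k by (simp_all add: matrix_vector_mul_assoc[symmetric] reflection_orthogonal
        reflection_self axis_component)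
  ultimately have "s = -1 \<Longrightarrow> g ** ?R \<in> SO1d_e i0 \<and> (g ** ?R) *v axis i0 1 = \<tau>
      \<and> (g ** ?R) *v axis i1 1 = \<sigma>"
    using g by (simp add: SO1d_e_mult matrix_vector_mul_assoc[symmetric] vec.neg)
  then show thesis
    using g that by auto
qed

lemma exists_future_unit_orthogonal:
  assumes \<sigma>: "beta i0 \<sigma> \<sigma> = -1" and w: "beta i0 w \<sigma> = 0" "beta i0 w w > -1"
  obtains \<tau> where "beta i0 \<tau> \<tau> = 1" "\<tau> $ i0 > 0" "beta i0 \<tau> \<sigma> = 0"
    and "(beta i0 \<tau> w)\<^sup>2 < 1 + beta i0 w w"
proof -
  define u where "u = axis i0 1 + \<sigma> $ i0 *\<^sub>R \<sigma>"
  define \<alpha> where "\<alpha> = beta i0 w u"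
  define t where "t = u + \<alpha> *\<^sub>R w"
  define B where "B = beta i0 w w"
  have u: "beta i0 u \<sigma> = 0" "beta i0 u u = 1 + (\<sigma> $ i0)\<^sup>2"
    using \<sigma> by (simp_all add: u_def power2_eq_square)
  have t: "beta i0 t \<sigma> = 0" "beta i0 t w = \<alpha> * (1 + B)"
    "beta i0 t t = beta i0 u u + \<alpha>\<^sup>2 * (2 + B)"
    using u w by (simp_all add: t_def \<alpha>_def B_def beta_commute[of i0 w u] algebra_simps
        power2_eq_square)
  have "\<alpha>\<^sup>2 * (2 + B) \<ge> 0"
    using w(2) by (simp add: B_def)
  then have T: "beta i0 t t > 0"
    using t(3) u(2) by (smt (verit) zero_le_power2)
  define r where "r = (if t $ i0 > 0 then 1 else -1) / sqrt (beta i0 t t)"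
  have r: "r\<^sup>2 = 1 / beta i0 t t"
    using T by (simp add: r_def power_divide)
  show thesis
  proof
    show "beta i0 (r *\<^sub>R t) (r *\<^sub>R t) = 1"
      using r T by (simp add: power2_eq_square mult.assoc[symmetric])
    show "(r *\<^sub>R t) $ i0 > 0"
      using T timelike_time_component_nonzero[OF T] by (auto simp: r_def)
    show "beta i0 (r *\<^sub>R t) \<sigma> = 0"
      using t(1) by simp
    have "(1 + B) * beta i0 t t - (\<alpha> * (1 + B))\<^sup>2 = (1 + B) * (beta i0 u u + \<alpha>\<^sup>2)"
      by (simp add: t(3) power2_eq_square algebra_simps)
    also have "\<dots> > 0"
      using w(2) u(2) by (simp add: B_def add_pos_nonneg)
    finally have "(\<alpha> * (1 + B))\<^sup>2 / beta i0 t t < 1 + B"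
      using T by (simp add: divide_less_eq)
    moreover have "(beta i0 (r *\<^sub>R t) w)\<^sup>2 = (\<alpha> * (1 + B))\<^sup>2 / beta i0 t t"
      using r t(2) by (simp add: power_mult_distrib)
    ultimately show "(beta i0 (r *\<^sub>R t) w)\<^sup>2 < 1 + beta i0 w w"
      by (simp add: B_def)
  qed
qed

lemma spacelike_pair_decomposition:
  assumes "(x, y) \<in> spacelike_pairs i0"
  obtains w \<sigma> and c :: real where "beta i0 \<sigma> \<sigma> = -1" "beta i0 w \<sigma> = 0"
    and "c > 0" "c\<^sup>2 = 1 + beta i0 w w" and "x = w + c *\<^sub>R \<sigma>" "y = w - c *\<^sub>R \<sigma>"
proof
  have xy: "beta i0 x x = -1" "beta i0 y y = -1" "beta i0 y x = beta i0 x y"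
    using assms by (auto simp: spacelike_pairs_def deSitter_def beta_commute)
  have "beta i0 (x - y) (x - y) < 0"
    using assms by (simp add: spacelike_pairs_def)
  then have k: "1 + beta i0 x y > 0"
    using xy by simp
  define c where "c = sqrt ((1 + beta i0 x y) / 2)"
  show c: "c > 0"
    using k by (simp add: c_def)
  have k_eq: "beta i0 x y = 2 * c\<^sup>2 - 1"
    using k by (simp add: c_def field_simps)
  show "beta i0 ((1 / (2 * c)) *\<^sub>R (x - y)) ((1 / (2 * c)) *\<^sub>R (x - y)) = -1"
    using xy c by (simp add: k_eq power2_eq_square field_simps)
  show "beta i0 ((1 / 2) *\<^sub>R (x + y)) ((1 / (2 * c)) *\<^sub>R (x - y)) = 0"
    using xy by simp
  show "c\<^sup>2 = 1 + beta i0 ((1 / 2) *\<^sub>R (x + y)) ((1 / 2) *\<^sub>R (x + y))"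
    using xy by (simp add: k_eq field_simps)
  show "x = (1 / 2) *\<^sub>R (x + y) + c *\<^sub>R (1 / (2 * c)) *\<^sub>R (x - y)"
    and "y = (1 / 2) *\<^sub>R (x + y) - c *\<^sub>R (1 / (2 * c)) *\<^sub>R (x - y)"
    using c by (simp_all add: vec_eq_iff field_simps)
qed

lemma Wplus_add_spacelike:
  assumes "i1 \<noteq> i0" and "p \<in> Wplus i0 i1" and "q \<in> Wplus i0 i1"
  shows "beta i0 (p + q) (p + q) < 0"
proof -
  have "\<bar>(p + q) $ i0\<bar> < (p + q) $ i1"
    using assms(2,3) by (auto simp: Wplus_iff)
  then have "\<bar>(p + q) $ i0\<bar>\<^sup>2 < ((p + q) $ i1)\<^sup>2"
    by (intro power_strict_mono) auto
  then show ?thesis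
    using beta_le_two_coordinates[OF assms(1), of "p + q"] by simp
qed

lemma preimage_in_Wplus:
  assumes "preserves_beta i0 g" and "i1 \<noteq> i0"
    and "g *v axis i0 1 = \<tau> \<or> g *v axis i0 1 = - \<tau>" and "g *v axis i1 1 = \<sigma>"
    and "g *v p = v" and "beta i0 v v = -1" and "\<bar>beta i0 \<tau> v\<bar> < - beta i0 \<sigma> v"
  shows "p \<in> Wplus i0 i1"
proof -
  have "p $ i0 = beta i0 (g *v axis i0 1) v"
    using preserves_betaD[OF assms(1), of "axis i0 1" p] assms(5) by simp
  then have "\<bar>p $ i0\<bar> = \<bar>beta i0 \<tau> v\<bar>"
    using assms(3) by auto
  moreover have "p $ i1 = - beta i0 \<sigma> v"
    using preserves_betaD[OF assms(1), of "axis i1 1" p] assms(2,4,5) by simp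
  moreover have "beta i0 p p = -1"
    using preserves_betaD[OF assms(1), of p p] assms(5,6) by simp
  ultimately show ?thesis
    using assms(7) by (simp add: Wplus_iff)
qed

lemma orbit_pairs_subset_spacelike_pairs:
  assumes "i1 \<noteq> i0" and "G \<subseteq> SO1d i0"
  shows "orbit_pairs G (Wplus i0 i1) \<subseteq> spacelike_pairs i0"
proof
  fix z assume "z \<in> orbit_pairs G (Wplus i0 i1)"
  then obtain g p q where z: "z = (g *v p, g *v (- q))" and "g \<in> G"
    and p: "p \<in> Wplus i0 i1" and q: "q \<in> Wplus i0 i1"
    unfolding orbit_pairs_def by auto
  then have g: "preserves_beta i0 g"
    using assms(2) SO1d_iff by blast
  have "g *v p - g *v (- q) = g *v (p + q)"
    by (simp add: vec.neg matrix_vector_right_distrib)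
  then show "z \<in> spacelike_pairs i0"
    using Wplus_add_spacelike[OF assms(1) p q] p q preserves_betaD[OF g]
    by (simp add: z spacelike_pairs_def deSitter_def Wplus_iff)
qed

lemma spacelike_pairs_subset_orbit_pairs:
  assumes "i1 \<noteq> i0" and "G \<subseteq> SO1d i0"
    and frame: "\<And>\<tau> \<sigma>. beta i0 \<tau> \<tau> = 1 \<Longrightarrow> \<tau> $ i0 > 0 \<Longrightarrow> beta i0 \<sigma> \<sigma> = -1 \<Longrightarrow>
      beta i0 \<tau> \<sigma> = 0 \<Longrightarrow>
      \<exists>g\<in>G. (g *v axis i0 1 = \<tau> \<or> g *v axis i0 1 = - \<tau>) \<and> g *v axis i1 1 = \<sigma>"
  shows "spacelike_pairs i0 \<subseteq> orbit_pairs G (Wplus i0 i1)"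
proof clarify
  fix x y assume xy: "(x, y) \<in> spacelike_pairs i0"
  then obtain w \<sigma> and c :: real where \<sigma>: "beta i0 \<sigma> \<sigma> = -1" "beta i0 w \<sigma> = 0"
    and c: "c > 0" "c\<^sup>2 = 1 + beta i0 w w" and x: "x = w + c *\<^sub>R \<sigma>" and y: "y = w - c *\<^sub>R \<sigma>"
    by (rule spacelike_pair_decomposition)
  have "beta i0 w w > -1"
    using c by (smt (verit) zero_less_power)
  then obtain \<tau> where \<tau>: "beta i0 \<tau> \<tau> = 1" "\<tau> $ i0 > 0" "beta i0 \<tau> \<sigma> = 0"
    and \<tau>w: "(beta i0 \<tau> w)\<^sup>2 < c\<^sup>2"
    using exists_future_unit_orthogonal[OF \<sigma>] c(2) by metis
  obtain g where "g \<in> G" and g: "g *v axis i0 1 = \<tau> \<or> g *v axis i0 1 = - \<tau>" "g *v axis i1 1 = \<sigma>"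
    using frame[OF \<tau>(1,2) \<sigma>(1) \<tau>(3)] by blast
  then have "g \<in> SO1d i0"
    using assms(2) by blast
  then have gp: "preserves_beta i0 g" and "invertible g"
    by (simp_all add: SO1d_iff invertible_det_nz)
  then obtain h where gh: "g ** h = mat 1"
    unfolding invertible_def by blast
  have "\<bar>beta i0 \<tau> w\<bar> < c"
    using power2_less_imp_less[of "\<bar>beta i0 \<tau> w\<bar>" c] \<tau>w c(1) by simp
  moreover have "beta i0 x x = -1" "beta i0 y y = -1"
    using xy by (simp_all add: spacelike_pairs_def deSitter_def)
  ultimately have "h *v x \<in> Wplus i0 i1" and "h *v (- y) \<in> Wplus i0 i1"
    using \<tau>(3) \<sigma>
    by (auto intro!: preimage_in_Wplus[OF gp assms(1) g]
        simp: gh matrix_vector_mul_assoc x y beta_commute[of i0 \<sigma> w])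
  moreover have "x = g *v (h *v x)" and "y = g *v (- (h *v (- y)))"
    by (simp_all add: gh matrix_vector_mul_assoc vec.neg)
  ultimately show "(x, y) \<in> orbit_pairs G (Wplus i0 i1)"
    unfolding orbit_pairs_def using \<open>g \<in> G\<close> by blast
qed

lemma orbit_pairs_eq_Union_wedges:
  "orbit_pairs (SO1d i0) (Wplus i0 i1) = (\<Union>W\<in>wedges i0 i1. W \<times> uminus ` W)"
  unfolding orbit_pairs_def wedges_def by (auto simp: vec.neg image_image) (metis imageI vec.neg)

theorem mainTheorem11:
  fixes i0 i1 :: "'n::finite"
  assumes "i0 \<noteq> i1"
  shows "spacelike_pairs i0 = orbit_pairs (SO1d i0) (Wplus i0 i1)
       \<and> spacelike_pairs i0 = (\<Union>W\<in>wedges i0 i1. W \<times> uminus ` W)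
       \<and> (CARD('n) - 1 > 1 \<longrightarrow> spacelike_pairs i0 = orbit_pairs (SO1d_e i0) (Wplus i0 i1))"
proof -
  have i: "i1 \<noteq> i0"
    using assms by simp
  have "spacelike_pairs i0 = orbit_pairs (SO1d i0) (Wplus i0 i1)"
  proof
    show "spacelike_pairs i0 \<subseteq> orbit_pairs (SO1d i0) (Wplus i0 i1)"
      by (rule spacelike_pairs_subset_orbit_pairs[OF i order_refl]) (metis SO1d_frame[OF i])
    show "orbit_pairs (SO1d i0) (Wplus i0 i1) \<subseteq> spacelike_pairs i0"
      by (rule orbit_pairs_subset_spacelike_pairs[OF i order_refl])
  qed
  moreover have "spacelike_pairs i0 = orbit_pairs (SO1d_e i0) (Wplus i0 i1)"
    if "CARD('n) - 1 > 1"
  proof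
    have "CARD('n) > 2"
      using that by simp
    then show "spacelike_pairs i0 \<subseteq> orbit_pairs (SO1d_e i0) (Wplus i0 i1)"
      by (intro spacelike_pairs_subset_orbit_pairs[OF i SO1d_e_subset]) (metis SO1d_e_frame i)
    show "orbit_pairs (SO1d_e i0) (Wplus i0 i1) \<subseteq> spacelike_pairs i0"
      by (rule orbit_pairs_subset_spacelike_pairs[OF i SO1d_e_subset])
  qed
  ultimately show ?thesis
    by (simp add: orbit_pairs_eq_Union_wedges)
qed

end
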